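(* Let $(\mathcal X,\mathcal A,\mu)$ be a measurable space with a $\sigma$-finite measure $\mu$, and let $p_1,p_2$ be probability densities with respect to $\mu$ that are mutually absolutely continuous, i.e. $p_1(x)=0\iff p_2(x)=0$ for $\mu$-a.e. $x$. Let $B=p_1/p_2$ (defined arbitrarily, e.g. as $1$, on $\{p_2=0\}$). For $t\in\mathbb R$ put $I(t)=\int p_1^{t}p_2^{1-t}\,d\mu\in[0,\infty]$, $D=\{t: I(t)<\infty\}$, and $\rho=I(1/2)=\int\sqrt{p_1p_2}\,d\mu$. For $t\in D$ define $R_1(t)=\mathrm{Var}_{\mathcal H_1}(B^{t-1})$, $R_2(t)=\mathrm{Var}_{\mathcal H_2}(B^{t})$ and $R(t)=\max\{R_1(t),R_2(t)\}\in[0,\infty]$. (i) If $p_1$ and $p_2$ are not equal $\mu$-a.e., then for every $t\in D$, $R(t)\ge 1-\rho^2$, with equality if and only if $t=1/2$; in particular $t=1/2$ is the unique minimizer of $R$ over $D$ and $R(1/2)=1-\rho^2$. (ii) For every $t\neq 1/2$ there exists a mutually absolutely continuous pair of densities $(p_1,p_2)$ (on some $\sigma$-finite measure space) for which $I(t)<\infty$ but $R(t)=+\infty$. In particular, for every fixed $t\ne 1/2$, $\sup\{R_{p_1,p_2}(t): (p_1,p_2)\in\mathcal P_{\mathrm{ac}},\ I(t)<\infty\}=+\infty$, whereas for every $(p_1,p_2)\in\mathcal P_{\mathrm{ac}}$, $R_{p_1,p_2}(1/2)=1-\rho(p_1,p_2)^2<\infty$.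
   Context: $\mathbb E_{\mathcal H_j}$, $\mathrm{Var}_{\mathcal H_j}$ denote expectation/variance when $X$ has density $p_j$. Variances take values in $[0,\infty]$, with $\mathrm{Var}(Z)=+\infty$ when $\mathbb E[Z^2]=+\infty$. $\mathcal P_{\mathrm{ac}}$ denotes the class of all pairs of mutually absolutely continuous $\mu$-densities $(p_1,p_2)$; subscripts $R_{p_1,p_2}$, $\rho(p_1,p_2)$ indicate dependence on the pair. *)

theory Defs
  imports "HOL-Analysis.Analysis"
begin

definition ac_dens_pair :: "'a measure \<Rightarrow> ('a \<Rightarrow> real) \<Rightarrow> ('a \<Rightarrow> real) \<Rightarrow> bool" where
  "ac_dens_pair M p1 p2 \<longleftrightarrow>
     sigma_finite_measure M \<and>
     p1 \<in> borel_measurable M \<and> p2 \<in> borel_measurable M \<and>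
     (\<forall>x\<in>space M. 0 \<le> p1 x \<and> 0 \<le> p2 x) \<and>
     (\<integral>\<^sup>+ x. ennreal (p1 x) \<partial>M) = 1 \<and>
     (\<integral>\<^sup>+ x. ennreal (p2 x) \<partial>M) = 1 \<and>
     (AE x in M. (p1 x = 0 \<longleftrightarrow> p2 x = 0))"

definition lr :: "('a \<Rightarrow> real) \<Rightarrow> ('a \<Rightarrow> real) \<Rightarrow> 'a \<Rightarrow> real" where
  "lr p1 p2 x = (if p2 x = 0 then 1 else p1 x / p2 x)"

text \<open>I(t) = integral of p1^t p2^(1-t), in [0,\<infinity>] (with 0 powr a = 0).\<close>
definition I_fun :: "'a measure \<Rightarrow> ('a \<Rightarrow> real) \<Rightarrow> ('a \<Rightarrow> real) \<Rightarrow> real \<Rightarrow> ennreal" where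
  "I_fun M p1 p2 t = (\<integral>\<^sup>+ x. ennreal (p1 x powr t * p2 x powr (1 - t)) \<partial>M)"

definition D_set :: "'a measure \<Rightarrow> ('a \<Rightarrow> real) \<Rightarrow> ('a \<Rightarrow> real) \<Rightarrow> real set" where
  "D_set M p1 p2 = {t. I_fun M p1 p2 t < \<infinity>}"

definition rho :: "'a measure \<Rightarrow> ('a \<Rightarrow> real) \<Rightarrow> ('a \<Rightarrow> real) \<Rightarrow> real" where
  "rho M p1 p2 = (LINT x|M. sqrt (p1 x * p2 x))"

definition var_H :: "'a measure \<Rightarrow> ('a \<Rightarrow> real) \<Rightarrow> ('a \<Rightarrow> real) \<Rightarrow> ennreal" where
  "var_H M p Z =
     (if (\<integral>\<^sup>+ x. ennreal (p x * (Z x)\<^sup>2) \<partial>M) = \<infinity> then \<infinity>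
      else (\<integral>\<^sup>+ x. ennreal (p x * (Z x - (LINT y|M. p y * Z y))\<^sup>2) \<partial>M))"

definition R1 :: "'a measure \<Rightarrow> ('a \<Rightarrow> real) \<Rightarrow> ('a \<Rightarrow> real) \<Rightarrow> real \<Rightarrow> ennreal" where
  "R1 M p1 p2 t = var_H M p1 (\<lambda>x. lr p1 p2 x powr (t - 1))"

definition R2 :: "'a measure \<Rightarrow> ('a \<Rightarrow> real) \<Rightarrow> ('a \<Rightarrow> real) \<Rightarrow> real \<Rightarrow> ennreal" where
  "R2 M p1 p2 t = var_H M p2 (\<lambda>x. lr p1 p2 x powr t)"

definition R_fun :: "'a measure \<Rightarrow> ('a \<Rightarrow> real) \<Rightarrow> ('a \<Rightarrow> real) \<Rightarrow> real \<Rightarrow> ennreal" where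
  "R_fun M p1 p2 t = max (R1 M p1 p2 t) (R2 M p1 p2 t)"

end

theory Submission
  imports Defs
begin

text \<open>Both variances are moments of the likelihood ratio:
  \<open>R2(t) = I(2t) - I(t)^2\<close>, and exchanging \<open>p1\<close> and \<open>p2\<close> turns \<open>R1(t)\<close> into \<open>R2(1 - t)\<close>.
  Since \<open>I(1) = 1\<close> and \<open>I(1/2) = \<rho>\<close>, both equal \<open>1 - \<rho>^2\<close> at \<open>t = 1/2\<close>.
  By Hoelder's inequality \<open>I\<close> is log-convex, and the Hellinger identity
  \<open>\<integral> (sqrt p1 - sqrt p2)^2 = 2 (1 - \<rho>)\<close> gives \<open>\<rho> < 1\<close> unless \<open>p1 = p2\<close> a.e.
  For \<open>t > 1/2\<close>, writing \<open>1\<close> and \<open>t\<close> as convex combinations of \<open>1/2\<close> and \<open>2t\<close>,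
  log-convexity yields \<open>I(2t) > 1\<close> and \<open>I(t)^2 \<le> \<rho>^2 I(2t)\<close>, hence
  \<open>R2(t) \<ge> I(2t) (1 - \<rho>^2) > 1 - \<rho>^2\<close>; the case \<open>t < 1/2\<close> is symmetric.
  For the unbounded examples take \<open>p2\<close> uniform on \<open>(0,1]\<close> and \<open>p1\<close> proportional to
  \<open>x^(-1/(2t))\<close>: then \<open>p1^t p2^(1-t) \<sim> x^(-1/2)\<close> is integrable but
  \<open>p1^(2t) p2^(1-2t) \<sim> x^(-1)\<close> is not.\<close>

lemma ac_dens_pair_swap: "ac_dens_pair M p1 p2 \<Longrightarrow> ac_dens_pair M p2 p1"
  unfolding ac_dens_pair_def by auto

lemma ac_dens_pairD:
  assumes "ac_dens_pair M p1 p2"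
  shows "p1 \<in> borel_measurable M" "p2 \<in> borel_measurable M"
    "\<And>x. x \<in> space M \<Longrightarrow> 0 \<le> p1 x" "\<And>x. x \<in> space M \<Longrightarrow> 0 \<le> p2 x"
    "(\<integral>\<^sup>+ x. ennreal (p1 x) \<partial>M) = 1" "(\<integral>\<^sup>+ x. ennreal (p2 x) \<partial>M) = 1"
    "AE x in M. 0 \<le> p1 x \<and> 0 \<le> p2 x \<and> (p1 x = 0 \<longleftrightarrow> p2 x = 0)"
  using assms unfolding ac_dens_pair_def by auto

lemma I_fun_swap: "I_fun M p2 p1 s = I_fun M p1 p2 (1 - s)"
  unfolding I_fun_def by (simp add: mult.commute)

lemma rho_swap: "rho M p2 p1 = rho M p1 p2"
  unfolding rho_def by (simp add: mult.commute)

lemma lr_measurable [measurable]: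
  assumes [measurable]: "p1 \<in> borel_measurable M" "p2 \<in> borel_measurable M"
  shows "lr p1 p2 \<in> borel_measurable M"
  unfolding lr_def by measurable

lemma I_fun_one:
  assumes "ac_dens_pair M p1 p2"
  shows "I_fun M p1 p2 1 = 1"
proof -
  have "I_fun M p1 p2 1 = (\<integral>\<^sup>+ x. ennreal (p1 x) \<partial>M)"
    unfolding I_fun_def
    by (rule nn_integral_cong_AE) (use ac_dens_pairD(7)[OF assms] in eventually_elim, auto)
  thus ?thesis using ac_dens_pairD(5)[OF assms] by simp
qed

lemma I_fun_pos:
  assumes ac: "ac_dens_pair M p1 p2"
  shows "0 < I_fun M p1 p2 s"
proof (rule ccontr)
  assume "\<not> 0 < I_fun M p1 p2 s"
  hence "I_fun M p1 p2 s = 0" by simp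
  hence "AE x in M. ennreal (p1 x powr s * p2 x powr (1 - s)) = 0"
    unfolding I_fun_def by (subst (asm) nn_integral_0_iff_AE) (use ac_dens_pairD[OF ac] in auto)
  hence "AE x in M. ennreal (p1 x) = 0"
    using ac_dens_pairD(7)[OF ac]
    by eventually_elim (auto simp: ennreal_eq_0_iff mult_le_0_iff)
  hence "(\<integral>\<^sup>+ x. ennreal (p1 x) \<partial>M) = 0"
    by (simp add: nn_integral_cong_AE)
  thus False using ac_dens_pairD(5)[OF ac] by simp
qed

lemma integral_eq_I_fun:
  assumes "ac_dens_pair M p1 p2"
  shows "(LINT x|M. p1 x powr s * p2 x powr (1 - s)) = enn2real (I_fun M p1 p2 s)"
  unfolding I_fun_def using ac_dens_pairD[OF assms]
  by (intro integral_eq_nn_integral) auto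

lemma density_integrable:
  fixes p :: "'a \<Rightarrow> real"
  assumes "p \<in> borel_measurable M" "\<And>x. x \<in> space M \<Longrightarrow> 0 \<le> p x"
    and "(\<integral>\<^sup>+x. ennreal (p x) \<partial>M) = 1"
  shows "integrable M p" "integral\<^sup>L M p = 1"
  using assms integral_eq_nn_integral[of p M]
  by (auto intro!: integrableI_nn_integral_finite[where x=1])

lemma ac_dens_pair_integrable:
  assumes "ac_dens_pair M p1 p2"
  shows "integrable M p1" "integrable M p2" "integral\<^sup>L M p1 = 1" "integral\<^sup>L M p2 = 1"
  using density_integrable[OF ac_dens_pairD(1,3,5)[OF assms]]
    density_integrable[OF ac_dens_pairD(2,4,6)[OF assms]] by auto

lemma var_H_eq_moments:
  assumes pm: "p \<in> borel_measurable M" and pn: "\<And>x. x \<in> space M \<Longrightarrow> 0 \<le> p x"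
    and p1: "(\<integral>\<^sup>+x. ennreal (p x) \<partial>M) = 1"
    and Zm: "Z \<in> borel_measurable M"
    and fin: "(\<integral>\<^sup>+x. ennreal (p x * (Z x)\<^sup>2) \<partial>M) \<noteq> \<infinity>"
  shows "var_H M p Z = ennreal ((LINT x|M. p x * (Z x)\<^sup>2) - (LINT x|M. p x * Z x)\<^sup>2)"
proof -
  note ip = density_integrable(1)[OF pm pn p1] and intp = density_integrable(2)[OF pm pn p1]
  have i2: "integrable M (\<lambda>x. p x * (Z x)\<^sup>2)"
    using fin pm Zm pn by (intro integrableI_nonneg) (auto simp: less_top)
  have i1: "integrable M (\<lambda>x. p x * Z x)"
  proof (rule Bochner_Integration.integrable_bound[OF Bochner_Integration.integrable_add[OF ip i2]])
    show "AE x in M. norm (p x * Z x) \<le> norm (p x + p x * (Z x)\<^sup>2)"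
    proof (intro AE_I2)
      fix x assume x: "x \<in> space M"
      have "\<bar>Z x\<bar> \<le> 1 + (Z x)\<^sup>2"
        using sum_squares_ge_zero[of "\<bar>Z x\<bar> - 1" 0] by (simp add: power2_eq_square algebra_simps)
      from mult_left_mono[OF this pn[OF x]] pn[OF x]
      show "norm (p x * Z x) \<le> norm (p x + p x * (Z x)\<^sup>2)"
        by (simp add: abs_mult algebra_simps)
    qed
  qed (use pm Zm in measurable)
  define E where "E = (LINT x|M. p x * Z x)"
  have sq: "p x * (Z x - E)\<^sup>2 = p x * (Z x)\<^sup>2 - (2 * E) * (p x * Z x) + E\<^sup>2 * p x" for x
    by (simp add: power2_eq_square algebra_simps)
  have "integrable M (\<lambda>x. p x * (Z x - E)\<^sup>2)"
    unfolding sq using i1 i2 ip by simp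
  hence "(\<integral>\<^sup>+x. ennreal (p x * (Z x - E)\<^sup>2) \<partial>M) = ennreal (LINT x|M. p x * (Z x - E)\<^sup>2)"
    by (rule nn_integral_eq_integral) (auto simp: pn)
  also have "(LINT x|M. p x * (Z x - E)\<^sup>2) = (LINT x|M. p x * (Z x)\<^sup>2) - E\<^sup>2"
    unfolding sq using i1 i2 ip intp by (simp add: E_def power2_eq_square)
  finally show ?thesis unfolding var_H_def E_def using fin by simp
qed

lemma var_H_cong_AE:
  assumes "p \<in> borel_measurable M" "Z \<in> borel_measurable M" "Z' \<in> borel_measurable M"
    and eq: "AE x in M. Z x = Z' x"
  shows "var_H M p Z = var_H M p Z'"
proof -
  have mean: "(LINT y|M. p y * Z y) = (LINT y|M. p y * Z' y)"
    using assms by (intro integral_cong_AE) auto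
  have "(\<integral>\<^sup>+x. ennreal (p x * (Z x - c)\<^sup>2) \<partial>M) = (\<integral>\<^sup>+x. ennreal (p x * (Z' x - c)\<^sup>2) \<partial>M)" for c
    by (rule nn_integral_cong_AE) (use eq in eventually_elim, simp)
  from this[of 0] this[of "LINT y|M. p y * Z' y"] show ?thesis
    unfolding var_H_def mean by simp
qed

lemma mult_lr_powr_eq:
  assumes "ac_dens_pair M p1 p2"
  shows "AE x in M. p2 x * lr p1 p2 x powr s = p1 x powr s * p2 x powr (1 - s)"
  using ac_dens_pairD(7)[OF assms]
  by eventually_elim (auto simp: lr_def powr_divide powr_diff mult.commute)

lemma R2_eq_I_fun:
  assumes ac: "ac_dens_pair M p1 p2"
  shows "R2 M p1 p2 t = (if I_fun M p1 p2 (2 * t) = \<infinity> then \<infinity>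
     else ennreal (enn2real (I_fun M p1 p2 (2 * t)) - (enn2real (I_fun M p1 p2 t))\<^sup>2))"
proof -
  note m [measurable] = ac_dens_pairD(1,2)[OF ac]
  have sq: "AE x in M. p2 x * (lr p1 p2 x powr t)\<^sup>2 = p1 x powr (2 * t) * p2 x powr (1 - 2 * t)"
    using mult_lr_powr_eq[OF ac, of "2 * t"]
    by eventually_elim (simp add: power2_eq_square powr_add[symmetric])
  have second: "(\<integral>\<^sup>+x. ennreal (p2 x * (lr p1 p2 x powr t)\<^sup>2) \<partial>M) = I_fun M p1 p2 (2 * t)"
    unfolding I_fun_def by (rule nn_integral_cong_AE) (use sq in eventually_elim, simp)
  have "(LINT x|M. p2 x * (lr p1 p2 x powr t)\<^sup>2) = enn2real (I_fun M p1 p2 (2 * t))"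
    using sq m by (subst integral_cong_AE[where g = "\<lambda>x. p1 x powr (2 * t) * p2 x powr (1 - 2 * t)"])
      (auto simp: integral_eq_I_fun[OF ac])
  moreover have "(LINT x|M. p2 x * lr p1 p2 x powr t) = enn2real (I_fun M p1 p2 t)"
    using mult_lr_powr_eq[OF ac, of t] m
    by (subst integral_cong_AE[where g = "\<lambda>x. p1 x powr t * p2 x powr (1 - t)"])
      (auto simp: integral_eq_I_fun[OF ac])
  moreover have "var_H M p2 (\<lambda>x. lr p1 p2 x powr t) =
      ennreal ((LINT x|M. p2 x * (lr p1 p2 x powr t)\<^sup>2) - (LINT x|M. p2 x * lr p1 p2 x powr t)\<^sup>2)"
    if "I_fun M p1 p2 (2 * t) \<noteq> \<infinity>"
    using that second ac_dens_pairD(4,6)[OF ac] by (intro var_H_eq_moments) auto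
  ultimately show ?thesis
    unfolding R2_def using second by (auto simp: var_H_def)
qed

lemma R1_eq_R2_swap:
  assumes ac: "ac_dens_pair M p1 p2"
  shows "R1 M p1 p2 t = R2 M p2 p1 (1 - t)"
proof -
  note m = ac_dens_pairD(1,2)[OF ac]
  have "AE x in M. lr p1 p2 x powr (t - 1) = lr p2 p1 x powr (1 - t)"
    using ac_dens_pairD(7)[OF ac] by eventually_elim (auto simp: lr_def powr_divide powr_diff mult_ac)
  thus ?thesis unfolding R1_def R2_def using m by (intro var_H_cong_AE) auto
qed


lemma integrable_sqrt_mult:
  assumes ac: "ac_dens_pair M p1 p2"
  shows "integrable M (\<lambda>x. sqrt (p1 x * p2 x))"
proof (rule Bochner_Integration.integrable_bound)
  show "integrable M (\<lambda>x. p1 x + p2 x)"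
    using ac_dens_pair_integrable[OF ac] by simp
  show "AE x in M. norm (sqrt (p1 x * p2 x)) \<le> norm (p1 x + p2 x)"
    using ac_dens_pairD(3,4)[OF ac] arith_geo_mean_sqrt[of "p1 _" "p2 _"] by (intro AE_I2) force
qed (use ac_dens_pairD(1,2)[OF ac] in measurable)

lemma Hellinger_integral_eq:
  assumes ac: "ac_dens_pair M p1 p2"
  shows "(LINT x|M. (sqrt (p1 x) - sqrt (p2 x))\<^sup>2) = 2 * (1 - rho M p1 p2)"
proof -
  note int = ac_dens_pair_integrable[OF ac] integrable_sqrt_mult[OF ac]
  have "(LINT x|M. (sqrt (p1 x) - sqrt (p2 x))\<^sup>2) = (LINT x|M. p1 x + p2 x - 2 * sqrt (p1 x * p2 x))"
    using ac_dens_pairD(3,4)[OF ac]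
    by (intro Bochner_Integration.integral_cong) (auto simp: power2_diff real_sqrt_mult)
  also have "\<dots> = 2 * (1 - rho M p1 p2)"
    using int by (simp add: rho_def)
  finally show ?thesis .
qed

lemma I_fun_half_eq_rho:
  assumes ac: "ac_dens_pair M p1 p2"
  shows "I_fun M p1 p2 (1/2) = ennreal (rho M p1 p2)"
  unfolding I_fun_def rho_def using integrable_sqrt_mult[OF ac] ac_dens_pairD(3,4)[OF ac]
  by (subst nn_integral_eq_integral[symmetric])
    (auto intro!: nn_integral_cong simp: powr_half_sqrt real_sqrt_mult)

lemma rho_pos:
  assumes "ac_dens_pair M p1 p2"
  shows "0 < rho M p1 p2"
  using I_fun_pos[OF assms, of "1/2"] I_fun_half_eq_rho[OF assms] by simp

lemma rho_less_one:
  assumes ac: "ac_dens_pair M p1 p2" and ne: "\<not> (AE x in M. p1 x = p2 x)"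
  shows "rho M p1 p2 < 1"
proof -
  have int: "integrable M (\<lambda>x. (sqrt (p1 x) - sqrt (p2 x))\<^sup>2)"
    using ac_dens_pairD(3,4)[OF ac] ac_dens_pair_integrable(1,2)[OF ac] integrable_sqrt_mult[OF ac]
    by (subst Bochner_Integration.integrable_cong[OF refl, where g = "\<lambda>x. p1 x + p2 x - 2 * sqrt (p1 x * p2 x)"])
      (auto simp: power2_diff real_sqrt_mult)
  have "\<not> (AE x in M. (sqrt (p1 x) - sqrt (p2 x))\<^sup>2 = 0)"
    using ne ac_dens_pairD(7)[OF ac] by auto
  hence "(LINT x|M. (sqrt (p1 x) - sqrt (p2 x))\<^sup>2) \<noteq> 0"
    using integral_nonneg_eq_0_iff_AE[OF int] by simp
  moreover have "0 \<le> (LINT x|M. (sqrt (p1 x) - sqrt (p2 x))\<^sup>2)"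
    by simp
  ultimately show ?thesis
    unfolding Hellinger_integral_eq[OF ac] by simp
qed

lemma nn_integral_powr_Holder:
  fixes f g :: "'a \<Rightarrow> real"
  assumes [measurable]: "f \<in> borel_measurable M" "g \<in> borel_measurable M"
    and nonneg: "\<And>x. x \<in> space M \<Longrightarrow> 0 \<le> f x" "\<And>x. x \<in> space M \<Longrightarrow> 0 \<le> g x"
    and \<theta>: "0 < \<theta>" "\<theta> < 1"
    and A: "(\<integral>\<^sup>+x. f x \<partial>M) = ennreal A" "0 < A"
    and C: "(\<integral>\<^sup>+x. g x \<partial>M) = ennreal C" "0 < C"
  shows "(\<integral>\<^sup>+x. ennreal (f x powr \<theta> * g x powr (1 - \<theta>)) \<partial>M) \<le> ennreal (A powr \<theta> * C powr (1 - \<theta>))"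
proof -
  define K where "K = A powr \<theta> * C powr (1 - \<theta>)"
  define h where "h x = K * (\<theta> * (f x / A) + (1 - \<theta>) * (g x / C))" for x
  have int: "integrable M f" "integrable M g"
    using A C nonneg by (auto intro!: integrableI_nn_integral_finite)
  have "integral\<^sup>L M f = A" "integral\<^sup>L M g = C"
    using A C nonneg by (simp_all add: integral_eq_nn_integral)
  moreover have "integral\<^sup>L M h = K * (\<theta> * (integral\<^sup>L M f / A) + (1 - \<theta>) * (integral\<^sup>L M g / C))"
    unfolding h_def using int by simp
  ultimately have "integral\<^sup>L M h = K"
    using A(2) C(2) by simp
  have Young: "f x powr \<theta> * g x powr (1 - \<theta>) \<le> h x" if x: "x \<in> space M" for x
  proof (cases "f x = 0 \<or> g x = 0")
    case True thus ?thesis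
      using nonneg[OF x] \<theta> A(2) C(2) by (auto simp: h_def K_def)
  next
    case False
    hence pos: "0 < f x / A" "0 < g x / C" using nonneg[OF x] A(2) C(2) by auto
    have "f x powr \<theta> * g x powr (1 - \<theta>) = K * ((f x / A) powr \<theta> * (g x / C) powr (1 - \<theta>))"
      using A(2) C(2) by (simp add: K_def powr_divide field_simps)
    also have "\<dots> \<le> h x"
      unfolding h_def using Youngs_inequality_0[OF _ _ _ pos, of \<theta> "1 - \<theta>"] \<theta>
      by (intro mult_left_mono) (auto simp: K_def)
    finally show ?thesis .
  qed
  have "(\<integral>\<^sup>+x. ennreal (f x powr \<theta> * g x powr (1 - \<theta>)) \<partial>M) \<le> (\<integral>\<^sup>+x. ennreal (h x) \<partial>M)"
    using Young by (intro nn_integral_mono ennreal_leI)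
  also have "\<dots> = ennreal (integral\<^sup>L M h)"
    using int nonneg \<theta> A(2) C(2)
    by (intro nn_integral_eq_integral) (auto simp: h_def K_def)
  finally show ?thesis
    using \<open>integral\<^sup>L M h = K\<close> by (simp add: K_def)
qed

lemma I_fun_log_convex:
  assumes ac: "ac_dens_pair M p1 p2" and \<theta>: "0 < \<theta>" "\<theta> < 1"
    and fin: "I_fun M p1 p2 a \<noteq> \<infinity>" "I_fun M p1 p2 b \<noteq> \<infinity>"
  shows "I_fun M p1 p2 (\<theta> * a + (1 - \<theta>) * b)
     \<le> ennreal (enn2real (I_fun M p1 p2 a) powr \<theta> * enn2real (I_fun M p1 p2 b) powr (1 - \<theta>))"
proof -
  note [measurable] = ac_dens_pairD(1,2)[OF ac]
  have "p1 x powr (\<theta> * a + (1 - \<theta>) * b) * p2 x powr (1 - (\<theta> * a + (1 - \<theta>) * b))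
      = (p1 x powr a * p2 x powr (1 - a)) powr \<theta> * (p1 x powr b * p2 x powr (1 - b)) powr (1 - \<theta>)" for x
    by (simp add: powr_mult powr_powr powr_add[symmetric] algebra_simps)
  hence "I_fun M p1 p2 (\<theta> * a + (1 - \<theta>) * b) = (\<integral>\<^sup>+x. ennreal
      ((p1 x powr a * p2 x powr (1 - a)) powr \<theta> * (p1 x powr b * p2 x powr (1 - b)) powr (1 - \<theta>)) \<partial>M)"
    unfolding I_fun_def by simp
  also have "\<dots> \<le> ennreal (enn2real (I_fun M p1 p2 a) powr \<theta> * enn2real (I_fun M p1 p2 b) powr (1 - \<theta>))"
    using fin I_fun_pos[OF ac, of a] I_fun_pos[OF ac, of b]
    by (intro nn_integral_powr_Holder \<theta>) (auto simp: I_fun_def enn2real_positive_iff less_top)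
  finally show ?thesis .
qed

lemma log_interpolation_bound:
  fixes \<alpha> r H h :: real
  assumes \<alpha>: "0 < \<alpha>" "\<alpha> < 1" and r: "0 < r" "r < 1" and pos: "0 < H" "0 < h"
    and one: "1 \<le> r powr \<alpha> * H powr (1 - \<alpha>)"
    and mid: "h \<le> r powr (1 - \<alpha>/2) * H powr (\<alpha>/2)"
  shows "1 - r\<^sup>2 < H - h\<^sup>2"
proof -
  have one': "0 \<le> \<alpha> * ln r + (1 - \<alpha>) * ln H"
    using ln_mono[OF one] r pos by (simp add: ln_mult)
  have mid': "ln h \<le> (1 - \<alpha>/2) * ln r + \<alpha>/2 * ln H"
    using ln_mono[OF mid] r pos by (simp add: ln_mult)
  have "\<alpha> * ln r < 0" using r \<alpha> by (simp add: mult_pos_neg)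
  hence "0 < ln H"
    using one' \<alpha> by (smt (verit) mult_le_0_iff)
  hence "1 < H" using pos by simp
  have "2 * ln h \<le> 2 * ln r + ln H"
    using one' mid' by (simp add: algebra_simps)
  hence "exp (2 * ln h) \<le> exp (2 * ln r + ln H)" by simp
  hence "h\<^sup>2 \<le> r\<^sup>2 * H"
    using r pos by (simp add: exp_add exp_of_nat_mult[of 2, simplified])
  moreover have "1 * (1 - r\<^sup>2) < H * (1 - r\<^sup>2)"
    using \<open>1 < H\<close> r by (intro mult_strict_right_mono) (auto simp: power_less_one_iff)
  ultimately show ?thesis by (simp add: algebra_simps)
qed

lemma one_minus_rho_sq_less_I_fun_variance:
  assumes ac: "ac_dens_pair M p1 p2" and ne: "\<not> (AE x in M. p1 x = p2 x)"
    and t: "1/2 < t" and fin: "I_fun M p1 p2 t \<noteq> \<infinity>" "I_fun M p1 p2 (2 * t) \<noteq> \<infinity>"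
  shows "1 - (rho M p1 p2)\<^sup>2 < enn2real (I_fun M p1 p2 (2 * t)) - (enn2real (I_fun M p1 p2 t))\<^sup>2"
proof -
  define \<alpha> where "\<alpha> = (4 * t - 2) / (4 * t - 1)"
  have \<alpha>: "0 < \<alpha>" "\<alpha> < 1" using t by (auto simp: \<alpha>_def field_simps)
  have "\<alpha> * (4 * t - 1) = 4 * t - 2" using t by (simp add: \<alpha>_def)
  hence one: "\<alpha> * (1/2) + (1 - \<alpha>) * (2 * t) = 1"
    and mid: "(1 - \<alpha>/2) * (1/2) + (1 - (1 - \<alpha>/2)) * (2 * t) = t"
    by (simp_all add: algebra_simps)
  have half: "I_fun M p1 p2 (1/2) \<noteq> \<infinity>" "enn2real (I_fun M p1 p2 (1/2)) = rho M p1 p2"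
    using I_fun_half_eq_rho[OF ac] rho_pos[OF ac] by simp_all
  have "1 \<le> rho M p1 p2 powr \<alpha> * enn2real (I_fun M p1 p2 (2 * t)) powr (1 - \<alpha>)"
    using I_fun_log_convex[OF ac \<alpha> half(1) fin(2)] rho_pos[OF ac]
    unfolding one I_fun_one[OF ac] half(2) by simp
  moreover have "enn2real (I_fun M p1 p2 t)
      \<le> rho M p1 p2 powr (1 - \<alpha>/2) * enn2real (I_fun M p1 p2 (2 * t)) powr (\<alpha>/2)"
    using I_fun_log_convex[of M p1 p2 "1 - \<alpha>/2", OF ac _ _ half(1) fin(2)] \<alpha> fin(1)
    unfolding mid half(2) by (simp add: enn2real_leI)
  ultimately show ?thesis
    using I_fun_pos[OF ac, of t] I_fun_pos[OF ac, of "2 * t"] fin rho_pos[OF ac] rho_less_one[OF ac ne] \<alpha>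
    by (intro log_interpolation_bound[of \<alpha>]) (auto simp: enn2real_positive_iff less_top)
qed

lemma one_minus_rho_sq_less_R2:
  assumes ac: "ac_dens_pair M p1 p2" and ne: "\<not> (AE x in M. p1 x = p2 x)"
    and t: "1/2 < t" "t \<in> D_set M p1 p2"
  shows "ennreal (1 - (rho M p1 p2)\<^sup>2) < R2 M p1 p2 t"
proof (cases "I_fun M p1 p2 (2 * t) = \<infinity>")
  case False
  have "0 \<le> 1 - (rho M p1 p2)\<^sup>2"
    using rho_pos[OF ac] rho_less_one[OF ac ne] by (simp add: power_le_one)
  with one_minus_rho_sq_less_I_fun_variance[OF ac ne t(1) _ False] t(2) False show ?thesis
    by (simp add: R2_eq_I_fun[OF ac] D_set_def ennreal_less_iff)
qed (simp add: R2_eq_I_fun[OF ac])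

lemma one_minus_rho_sq_less_R1:
  assumes ac: "ac_dens_pair M p1 p2" and ne: "\<not> (AE x in M. p1 x = p2 x)"
    and t: "t < 1/2" "t \<in> D_set M p1 p2"
  shows "ennreal (1 - (rho M p1 p2)\<^sup>2) < R1 M p1 p2 t"
proof -
  have "\<not> (AE x in M. p2 x = p1 x)"
    using ne by (simp add: eq_commute[of "p2 _"])
  moreover have "1 - t \<in> D_set M p2 p1"
    using t(2) by (simp add: D_set_def I_fun_swap[of M p2 p1 "1 - t"])
  ultimately have "ennreal (1 - (rho M p2 p1)\<^sup>2) < R2 M p2 p1 (1 - t)"
    using t(1) by (intro one_minus_rho_sq_less_R2[OF ac_dens_pair_swap[OF ac]]) auto
  thus ?thesis by (simp only: R1_eq_R2_swap[OF ac] rho_swap)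
qed

lemma R2_half_eq:
  assumes ac: "ac_dens_pair M p1 p2"
  shows "R2 M p1 p2 (1/2) = ennreal (1 - (rho M p1 p2)\<^sup>2)"
  using I_fun_one[OF ac] I_fun_half_eq_rho[OF ac] rho_pos[OF ac] by (simp add: R2_eq_I_fun[OF ac])

lemma R_fun_half_eq:
  assumes ac: "ac_dens_pair M p1 p2"
  shows "R_fun M p1 p2 (1/2) = ennreal (1 - (rho M p1 p2)\<^sup>2)"
  using R2_half_eq[OF ac] R2_half_eq[OF ac_dens_pair_swap[OF ac]]
  by (simp add: R_fun_def R1_eq_R2_swap[OF ac] rho_swap)

lemma one_minus_rho_sq_less_R_fun:
  assumes ac: "ac_dens_pair M p1 p2" and ne: "\<not> (AE x in M. p1 x = p2 x)"
    and t: "t \<in> D_set M p1 p2" "t \<noteq> 1/2"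
  shows "ennreal (1 - (rho M p1 p2)\<^sup>2) < R_fun M p1 p2 t"
  using one_minus_rho_sq_less_R1[OF ac ne _ t(1)] one_minus_rho_sq_less_R2[OF ac ne _ t(1)] t(2)
  unfolding R_fun_def by (cases "t < 1/2") (auto simp: less_max_iff_disj)

lemma nn_integral_powr_unit_interval:
  fixes e :: real
  assumes "-1 < e"
  shows "(\<integral>\<^sup>+x. ennreal (indicator {0<..1} x * x powr e) \<partial>lborel) = ennreal (1 / (e + 1))"
proof -
  have "((\<lambda>x::real. x powr e) has_integral (1 / (e + 1))) {0..1}"
    using has_integral_powr_from_0[of e 1] assms by simp
  hence "(\<integral>\<^sup>+x. ennreal (x powr e) * indicator {0..1} x \<partial>lborel) = ennreal (1 / (e + 1))"
    by (rule nn_integral_has_integral_lebesgue'[rotated]) simp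
  moreover have "(\<integral>\<^sup>+x. ennreal (indicator {0<..1} x * x powr e) \<partial>lborel)
      = (\<integral>\<^sup>+x. ennreal (x powr e) * indicator {0..1} x \<partial>lborel)"
    by (rule nn_integral_cong) (auto simp: indicator_def)
  ultimately show ?thesis by simp
qed

lemma nn_integral_inverse_unit_interval:
  "(\<integral>\<^sup>+x. ennreal (indicator {0<..1} x * x powr (-1)) \<partial>lborel) = \<infinity>"
proof (rule ccontr)
  let ?X = "\<integral>\<^sup>+x. ennreal (indicator {0<..1} x * x powr (-1)) \<partial>lborel"
  assume "?X \<noteq> \<infinity>"
  then obtain K where K: "?X = ennreal K" "0 \<le> K" by (cases ?X rule: ennreal_cases) auto
  define e where "e = 1 / (K + 1) - 1"
  have e: "-1 < e" "1 / (e + 1) = K + 1" using K by (simp_all add: e_def)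
  have "ennreal (K + 1) = (\<integral>\<^sup>+x. ennreal (indicator {0<..1} x * x powr e) \<partial>lborel)"
    using nn_integral_powr_unit_interval[OF e(1)] e(2) by simp
  also have "\<dots> \<le> ?X"
  proof (intro nn_integral_mono ennreal_leI)
    fix x :: real
    have "x powr e \<le> x powr (-1)" if "x \<in> {0<..1}"
      using that e(1) by (intro powr_mono') auto
    thus "indicator {0<..1} x * x powr e \<le> indicator {0<..1} x * x powr (-1)"
      by (cases "x \<in> {0<..1}") auto
  qed
  finally show False using K by simp
qed

lemma exists_ac_dens_pair_I_fun_double_infinite:
  fixes s :: real
  assumes s: "1/2 < s"
  shows "\<exists>(N::real measure) q1 q2. ac_dens_pair N q1 q2 \<and> I_fun N q1 q2 s < \<infinity> \<and> I_fun N q1 q2 (2 * s) = \<infinity>"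
proof -
  define a where "a = 1 / (2 * s)"
  have a: "0 < a" "a < 1" "a * s = 1/2" "a * (2 * s) = 1" using s by (auto simp: a_def field_simps)
  define q1 :: "real \<Rightarrow> real" where "q1 x = indicator {0<..1} x * ((1 - a) * x powr (-a))" for x
  define q2 :: "real \<Rightarrow> real" where "q2 = indicator {0<..1}"
  have I: "I_fun lborel q1 q2 u
      = ennreal ((1 - a) powr u) * (\<integral>\<^sup>+x. ennreal (indicator {0<..1} x * x powr (-(a * u))) \<partial>lborel)" for u
    unfolding I_fun_def using a
    by (subst nn_integral_cmult[symmetric])
      (auto intro!: nn_integral_cong simp: q1_def q2_def indicator_def powr_mult powr_powr ennreal_mult[symmetric])
  have "(\<integral>\<^sup>+x. ennreal (q1 x) \<partial>lborel) = I_fun lborel q1 q2 1"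
    unfolding I_fun_def using a by (intro nn_integral_cong) (simp add: q1_def q2_def indicator_def)
  also have "\<dots> = 1"
    using a unfolding I by (simp add: nn_integral_powr_unit_interval ennreal_mult[symmetric])
  finally have int1: "(\<integral>\<^sup>+x. ennreal (q1 x) \<partial>lborel) = 1" .
  have "(\<integral>\<^sup>+x. ennreal (q2 x) \<partial>lborel) = I_fun lborel q1 q2 0"
    unfolding I_fun_def using a by (intro nn_integral_cong) (simp add: q1_def q2_def indicator_def)
  also have "\<dots> = 1"
    unfolding I using a nn_integral_powr_unit_interval[of 0] by simp
  finally have int2: "(\<integral>\<^sup>+x. ennreal (q2 x) \<partial>lborel) = 1" .
  have "q1 \<in> borel_measurable lborel" "q2 \<in> borel_measurable lborel"
    unfolding q1_def q2_def by measurable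
  hence "ac_dens_pair lborel q1 q2"
    unfolding ac_dens_pair_def using sigma_finite_lborel int1 int2 a
    by (auto simp: q1_def q2_def indicator_def)
  moreover have "I_fun lborel q1 q2 s < \<infinity>"
    unfolding I a(3) using a(1,2) by (simp add: nn_integral_powr_unit_interval ennreal_mult_less_top)
  moreover have "I_fun lborel q1 q2 (2 * s) = \<infinity>"
    unfolding I a(4) using nn_integral_inverse_unit_interval a(1,2) by (simp add: ennreal_mult_top)
  ultimately show ?thesis by blast
qed

lemma exists_ac_dens_pair_R_fun_infinite:
  fixes t :: real
  assumes t: "t \<noteq> 1/2"
  shows "\<exists>(N::real measure) q1 q2. ac_dens_pair N q1 q2 \<and> I_fun N q1 q2 t < \<infinity> \<and> R_fun N q1 q2 t = \<infinity>"
proof (cases "1/2 < t")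
  case True
  then obtain N :: "real measure" and q1 q2 where
    ac: "ac_dens_pair N q1 q2" and "I_fun N q1 q2 t < \<infinity>" "I_fun N q1 q2 (2 * t) = \<infinity>"
    using exists_ac_dens_pair_I_fun_double_infinite by blast
  moreover from this have "R_fun N q1 q2 t = \<infinity>"
    by (simp add: R_fun_def R2_eq_I_fun[OF ac])
  ultimately show ?thesis by blast
next
  case False
  with t have "1/2 < 1 - t" by simp
  then obtain N :: "real measure" and q1 q2 where
    ac: "ac_dens_pair N q1 q2" and "I_fun N q1 q2 (1 - t) < \<infinity>" "I_fun N q1 q2 (2 * (1 - t)) = \<infinity>"
    using exists_ac_dens_pair_I_fun_double_infinite by blast
  moreover from this have "R_fun N q2 q1 t = \<infinity>"
    by (simp add: R_fun_def R1_eq_R2_swap[OF ac_dens_pair_swap[OF ac]] R2_eq_I_fun[OF ac])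
  ultimately show ?thesis
    using ac_dens_pair_swap[OF ac] I_fun_swap[of N q2 q1 t]
    by (intro exI[of _ N] exI[of _ q2] exI[of _ q1]) auto
qed

lemma SUP_R_fun_eq_infinity:
  fixes t :: real
  assumes "t \<noteq> 1/2"
  shows "(SUP (N, q1, q2) \<in> {(N :: real measure, q1, q2). ac_dens_pair N q1 q2 \<and> I_fun N q1 q2 t < \<infinity>}.
      R_fun N q1 q2 t) = \<infinity>"
proof -
  obtain N :: "real measure" and q1 q2 where
    "ac_dens_pair N q1 q2" "I_fun N q1 q2 t < \<infinity>" "R_fun N q1 q2 t = \<infinity>"
    using exists_ac_dens_pair_R_fun_infinite[OF assms] by blast
  hence "\<infinity> \<le> (SUP (N, q1, q2) \<in> {(N :: real measure, q1, q2). ac_dens_pair N q1 q2 \<and> I_fun N q1 q2 t < \<infinity>}.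
      R_fun N q1 q2 t)"
    by (intro SUP_upper2[of "(N, q1, q2)"]) auto
  thus ?thesis by (simp add: top_unique)
qed

theorem theorem2:
  fixes M :: "'a measure" and p1 p2 :: "'a \<Rightarrow> real"
  assumes "ac_dens_pair M p1 p2"
  shows
    "(\<not> (AE x in M. p1 x = p2 x) \<longrightarrow>
        (\<forall>t\<in>D_set M p1 p2.
            R_fun M p1 p2 t \<ge> ennreal (1 - (rho M p1 p2)\<^sup>2) \<and>
            (R_fun M p1 p2 t = ennreal (1 - (rho M p1 p2)\<^sup>2) \<longleftrightarrow> t = 1/2)) \<and>
        1/2 \<in> D_set M p1 p2 \<and>
        (\<forall>t\<in>D_set M p1 p2. R_fun M p1 p2 (1/2) \<le> R_fun M p1 p2 t))
     \<and> R_fun M p1 p2 (1/2) = ennreal (1 - (rho M p1 p2)\<^sup>2)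
     \<and> (\<forall>t::real. t \<noteq> 1/2 \<longrightarrow>
          (\<exists>(N :: real measure) q1 q2. ac_dens_pair N q1 q2 \<and>
              I_fun N q1 q2 t < \<infinity> \<and> R_fun N q1 q2 t = \<infinity>))
     \<and> (\<forall>t::real. t \<noteq> 1/2 \<longrightarrow>
          (SUP (N, q1, q2) \<in> {(N :: real measure, q1, q2). ac_dens_pair N q1 q2 \<and> I_fun N q1 q2 t < \<infinity>}.
              R_fun N q1 q2 t) = \<infinity>)"
proof -
  let ?e = "ennreal (1 - (rho M p1 p2)\<^sup>2)"
  have half: "R_fun M p1 p2 (1/2) = ?e"
    by (rule R_fun_half_eq[OF assms])
  have "?e \<le> R_fun M p1 p2 t \<and> (R_fun M p1 p2 t = ?e \<longleftrightarrow> t = 1/2)"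
    if "\<not> (AE x in M. p1 x = p2 x)" "t \<in> D_set M p1 p2" for t
  proof (cases "t = 1/2")
    case True
    show ?thesis unfolding True half by simp
  next
    case False
    with one_minus_rho_sq_less_R_fun[OF assms that] show ?thesis by auto
  qed
  moreover have "1/2 \<in> D_set M p1 p2"
    using I_fun_half_eq_rho[OF assms] by (simp add: D_set_def)
  ultimately show ?thesis
    using half exists_ac_dens_pair_R_fun_infinite SUP_R_fun_eq_infinity by simp
qed

end
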